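(* Let $n\ge2$, $\beta_i>0$, $\nu_i\in[0,1]$ and $\rho_i\in[0,1]$ for $i\in\{1,\dots,n\}$, and consider the well-mixed resource–consumption system \[ \dot x=(1-x)x-x\sum_{i=1}^n y_i,\qquad \dot y_i=\beta_i\Big((1-\nu_i)(x-\rho_i)+\frac{\nu_i}{n-1}\sum_{j\ne i}(y_j-y_i)\Big),\quad i=1,\dots,n . \] Assume that at most one of $\nu_1,\dots,\nu_n$ equals $0$, and that it is not the case that all $\nu_i=1$, not the case that all $\nu_i=0$, not the case that all $\rho_i=1$, and not the case that all $\rho_i=0$. Then the point $(\bar x,\bar y_1,\dots,\bar y_n)$ given by \[ \bar x=\frac{\sum_{i}\Big(\rho_i(\nu_i-1)\prod_{j\ne i}\nu_j\Big)}{n\prod_{j}\nu_j-\sum_{j}\prod_{k\ne j}\nu_k}, \] \[ \bar y_i=\frac1n+\frac{\rho_i(\nu_i-1)\Big((1-n)\sum_{j\ne i}\prod_{k\ne i,j}\nu_k+n(n-2)\prod_{j\ne i}\nu_j\Big)-(1-n+n\nu_i)\sum_{j\ne i}\Big(\rho_j(\nu_j-1)\prod_{k\ne i,j}\nu_k\Big)}{n\Big(n\prod_{j}\nu_j-\sum_{j}\prod_{k\ne j}\nu_k\Big)}, \] for $i\in\{1,\dots,n\}$ (all indices ranging over $\{1,\dots,n\}$, empty products equal to $1$), is an equilibrium of the system.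
   Context: An equilibrium is a point $(\bar x,\bar y_1,\dots,\bar y_n)\in\mathbb{R}^{n+1}$ at which all right-hand sides vanish. *)

theory Defs
  imports Complex_Main
begin

text \<open>Indices range over {1..n}. The state is (x, y) with y :: nat => real,
  only y 1, ..., y n being relevant.\<close>

definition rhs_x :: "nat \<Rightarrow> real \<Rightarrow> (nat \<Rightarrow> real) \<Rightarrow> real" where
  "rhs_x n x y = (1 - x) * x - x * (\<Sum>i\<in>{1..n}. y i)"

definition rhs_y :: "nat \<Rightarrow> (nat \<Rightarrow> real) \<Rightarrow> (nat \<Rightarrow> real) \<Rightarrow> (nat \<Rightarrow> real)
    \<Rightarrow> real \<Rightarrow> (nat \<Rightarrow> real) \<Rightarrow> nat \<Rightarrow> real" where
  "rhs_y n \<beta> \<nu> \<rho> x y i =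
     \<beta> i * ((1 - \<nu> i) * (x - \<rho> i)
            + \<nu> i / (real n - 1) * (\<Sum>j\<in>{1..n} - {i}. (y j - y i)))"

definition is_equilibrium :: "nat \<Rightarrow> (nat \<Rightarrow> real) \<Rightarrow> (nat \<Rightarrow> real) \<Rightarrow> (nat \<Rightarrow> real)
    \<Rightarrow> real \<Rightarrow> (nat \<Rightarrow> real) \<Rightarrow> bool" where
  "is_equilibrium n \<beta> \<nu> \<rho> x y \<longleftrightarrow>
     rhs_x n x y = 0 \<and> (\<forall>i\<in>{1..n}. rhs_y n \<beta> \<nu> \<rho> x y i = 0)"

definition denom :: "nat \<Rightarrow> (nat \<Rightarrow> real) \<Rightarrow> real" where
  "denom n \<nu> = real n * (\<Prod>j\<in>{1..n}. \<nu> j) - (\<Sum>j\<in>{1..n}. \<Prod>k\<in>{1..n} - {j}. \<nu> k)"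

definition xbar :: "nat \<Rightarrow> (nat \<Rightarrow> real) \<Rightarrow> (nat \<Rightarrow> real) \<Rightarrow> real" where
  "xbar n \<nu> \<rho> =
     (\<Sum>i\<in>{1..n}. \<rho> i * (\<nu> i - 1) * (\<Prod>j\<in>{1..n} - {i}. \<nu> j)) / denom n \<nu>"

definition ybar :: "nat \<Rightarrow> (nat \<Rightarrow> real) \<Rightarrow> (nat \<Rightarrow> real) \<Rightarrow> nat \<Rightarrow> real" where
  "ybar n \<nu> \<rho> i =
     1 / real n +
     (\<rho> i * (\<nu> i - 1) *
        ((1 - real n) * (\<Sum>j\<in>{1..n} - {i}. \<Prod>k\<in>{1..n} - {i, j}. \<nu> k)
         + real n * (real n - 2) * (\<Prod>j\<in>{1..n} - {i}. \<nu> j))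
      - (1 - real n + real n * \<nu> i) *
          (\<Sum>j\<in>{1..n} - {i}. \<rho> j * (\<nu> j - 1) * (\<Prod>k\<in>{1..n} - {i, j}. \<nu> k)))
     / (real n * denom n \<nu>)"

end

theory Submission
  imports Defs
begin

text \<open>Both coordinates are rational functions of the \<open>\<nu>\<close> with common denominator
  \<open>D = denom n \<nu>\<close>. Writing \<open>P\<^sub>i\<close> for the product of the \<open>\<nu>\<^sub>j\<close> with \<open>j \<noteq> i\<close>, one has
  \<open>D = \<Sum>\<^sub>j (\<nu>\<^sub>j - 1) P\<^sub>j\<close>; every summand is \<open>\<le> 0\<close> and, since at most one \<open>\<nu>\<^sub>j\<close> vanishes and
  not all equal 1, some summand is \<open>< 0\<close>, so \<open>D \<noteq> 0\<close>. Exchanging the order of the double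
  sums shows that the numerators of the \<open>ybar\<close> add up to \<open>-n\<close> times the numerator of
  \<open>xbar\<close>, i.e. \<open>\<Sum>\<^sub>i ybar\<^sub>i = 1 - xbar\<close>. This makes the \<open>x\<close>-equation vanish and turns the
  coupling term of the \<open>i\<close>-th \<open>y\<close>-equation into \<open>(1 - xbar - n ybar\<^sub>i)/(n - 1)\<close>, after which
  the \<open>i\<close>-th equation is a polynomial identity once \<open>D\<close> and the numerator of \<open>xbar\<close> are
  expanded around the index \<open>i\<close>.\<close>

lemma prod_Diff_remove_pair:
  fixes f :: "'a \<Rightarrow> 'b::comm_monoid_mult"
  assumes "finite I" "i \<in> I" "j \<in> I" "i \<noteq> j"
  shows "(\<Prod>k\<in>I - {j}. f k) = f i * (\<Prod>k\<in>I - {i, j}. f k)"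
proof -
  have "I - {j} - {i} = I - {i, j}" by auto
  then show ?thesis
    using assms prod.remove[of "I - {j}" i f] by simp
qed

lemma real_card_Diff_singleton:
  assumes "finite I" "i \<in> I"
  shows "real (card (I - {i})) = real (card I) - 1"
  using card_Suc_Diff1[OF assms] by (simp flip: of_nat_Suc)

lemma sum_off_diagonal_swap:
  fixes g :: "'a \<Rightarrow> 'a \<Rightarrow> 'b::comm_monoid_add"
  assumes "finite I"
  shows "(\<Sum>i\<in>I. \<Sum>j\<in>I - {i}. g i j) = (\<Sum>j\<in>I. \<Sum>i\<in>I - {j}. g i j)"
proof -
  have "\<And>i. I - {i} = {j. j \<in> I \<and> i \<noteq> j}" "\<And>j. I - {j} = {i. i \<in> I \<and> i \<noteq> j}"
    by auto
  then show ?thesis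
    using sum.swap_restrict[OF assms assms, of g "\<lambda>i j. i \<noteq> j"] by simp
qed

lemma sum_weighted_cofactors:
  fixes \<nu> :: "'a \<Rightarrow> real"
  assumes "finite I" "j \<in> I"
  shows "(\<Sum>i\<in>I - {j}. (c + d * \<nu> i) * (\<Prod>k\<in>I - {i, j}. \<nu> k))
       = c * (\<Sum>i\<in>I - {j}. \<Prod>k\<in>I - {j, i}. \<nu> k)
         + d * (real (card I) - 1) * (\<Prod>k\<in>I - {j}. \<nu> k)"
proof -
  have "(\<Sum>i\<in>I - {j}. (c + d * \<nu> i) * (\<Prod>k\<in>I - {i, j}. \<nu> k))
      = (\<Sum>i\<in>I - {j}. c * (\<Prod>k\<in>I - {j, i}. \<nu> k) + d * (\<Prod>k\<in>I - {j}. \<nu> k))"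
    using assms prod_Diff_remove_pair[OF assms(1) _ assms(2), of _ \<nu>]
    by (intro sum.cong) (auto simp: algebra_simps insert_commute)
  also have "\<dots> = c * (\<Sum>i\<in>I - {j}. \<Prod>k\<in>I - {j, i}. \<nu> k)
      + real (card (I - {j})) * (d * (\<Prod>k\<in>I - {j}. \<nu> k))"
    by (simp add: sum.distrib sum_distrib_left)
  also have "real (card (I - {j})) = real (card I) - 1"
    using assms by (rule real_card_Diff_singleton)
  finally show ?thesis by (simp add: algebra_simps)
qed

lemma denom_eq_sum:
  "denom n \<nu> = (\<Sum>j\<in>{1..n}. (\<nu> j - 1) * (\<Prod>k\<in>{1..n} - {j}. \<nu> k))"
proof -
  have "real n * (\<Prod>j\<in>{1..n}. \<nu> j) = (\<Sum>j\<in>{1..n}. \<nu> j * (\<Prod>k\<in>{1..n} - {j}. \<nu> k))"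
    by (simp add: prod.remove[symmetric])
  then show ?thesis
    unfolding denom_def by (simp add: algebra_simps sum_subtractf)
qed

lemma denom_neg:
  assumes "\<forall>i\<in>{1..n}. 0 \<le> \<nu> i \<and> \<nu> i \<le> 1"
    and "card {i\<in>{1..n}. \<nu> i = 0} \<le> 1"
    and "\<not> (\<forall>i\<in>{1..n}. \<nu> i = 1)"
  shows "denom n \<nu> < 0"
proof -
  let ?I = "{1..n::nat}"
  have unique_zero: "k = m" if "k \<in> ?I" "m \<in> ?I" "\<nu> k = 0" "\<nu> m = 0" for k m
  proof (rule ccontr)
    assume "k \<noteq> m"
    then have "card {k, m} \<le> card {i\<in>?I. \<nu> i = 0}"
      using that by (intro card_mono) auto
    with \<open>k \<noteq> m\<close> assms(2) show False by simp
  qed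
  have pos_if_nonzero: "\<nu> k > 0" if "k \<in> ?I" "\<nu> k \<noteq> 0" for k
    using assms(1) that by (metis order_le_neq_trans)
  obtain j where j: "j \<in> ?I" "\<nu> j < 1" and others_pos: "\<forall>k\<in>?I - {j}. \<nu> k > 0"
  proof (cases "\<exists>k\<in>?I. \<nu> k = 0")
    case True
    then obtain k where k: "k \<in> ?I" "\<nu> k = 0" by blast
    show ?thesis
    proof (rule that[of k])
      show "\<forall>m\<in>?I - {k}. \<nu> m > 0"
        using unique_zero pos_if_nonzero k by blast
    qed (use k in auto)
  next
    case False
    obtain j where "j \<in> ?I" "\<nu> j \<noteq> 1" using assms(3) by auto
    with assms(1) False pos_if_nonzero show ?thesis
      by (intro that[of j]) (auto simp: order_le_less)
  qed
  have "(\<nu> j - 1) * (\<Prod>k\<in>?I - {j}. \<nu> k) < 0"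
    using j others_pos by (intro mult_neg_pos prod_pos) auto
  moreover have "(\<Sum>k\<in>?I - {j}. (\<nu> k - 1) * (\<Prod>l\<in>?I - {k}. \<nu> l)) \<le> 0"
    using assms(1) by (intro sum_nonpos mult_nonpos_nonneg prod_nonneg) auto
  moreover have "denom n \<nu> = (\<nu> j - 1) * (\<Prod>k\<in>?I - {j}. \<nu> k)
      + (\<Sum>k\<in>?I - {j}. (\<nu> k - 1) * (\<Prod>l\<in>?I - {k}. \<nu> l))"
    unfolding denom_eq_sum using j by (simp add: sum.remove)
  ultimately show ?thesis by linarith
qed

lemma denom_expand_at:
  assumes "i \<in> {1..n}"
  shows "denom n \<nu> = (real n * \<nu> i - 1) * (\<Prod>j\<in>{1..n} - {i}. \<nu> j)
      - \<nu> i * (\<Sum>j\<in>{1..n} - {i}. \<Prod>k\<in>{1..n} - {i, j}. \<nu> k)"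
proof -
  have "(\<Sum>j\<in>{1..n} - {i}. \<Prod>k\<in>{1..n} - {j}. \<nu> k)
      = \<nu> i * (\<Sum>j\<in>{1..n} - {i}. \<Prod>k\<in>{1..n} - {i, j}. \<nu> k)"
    unfolding sum_distrib_left using assms
    by (intro sum.cong) (auto intro: prod_Diff_remove_pair)
  then show ?thesis
    using assms unfolding denom_def
    by (simp add: sum.remove[of _ i] prod.remove[of _ i] algebra_simps)
qed

definition xbar_num :: "nat \<Rightarrow> (nat \<Rightarrow> real) \<Rightarrow> (nat \<Rightarrow> real) \<Rightarrow> real" where
  "xbar_num n \<nu> \<rho> = (\<Sum>i\<in>{1..n}. \<rho> i * (\<nu> i - 1) * (\<Prod>j\<in>{1..n} - {i}. \<nu> j))"

definition ybar_num :: "nat \<Rightarrow> (nat \<Rightarrow> real) \<Rightarrow> (nat \<Rightarrow> real) \<Rightarrow> nat \<Rightarrow> real" where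
  "ybar_num n \<nu> \<rho> i =
     \<rho> i * (\<nu> i - 1) *
        ((1 - real n) * (\<Sum>j\<in>{1..n} - {i}. \<Prod>k\<in>{1..n} - {i, j}. \<nu> k)
         + real n * (real n - 2) * (\<Prod>j\<in>{1..n} - {i}. \<nu> j))
     - (1 - real n + real n * \<nu> i) *
          (\<Sum>j\<in>{1..n} - {i}. \<rho> j * (\<nu> j - 1) * (\<Prod>k\<in>{1..n} - {i, j}. \<nu> k))"

lemma xbar_eq: "xbar n \<nu> \<rho> = xbar_num n \<nu> \<rho> / denom n \<nu>"
  unfolding xbar_def xbar_num_def ..

lemma ybar_eq: "ybar n \<nu> \<rho> i = 1 / real n + ybar_num n \<nu> \<rho> i / (real n * denom n \<nu>)"
  unfolding ybar_def ybar_num_def ..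

lemma xbar_num_expand_at:
  assumes "i \<in> {1..n}"
  shows "xbar_num n \<nu> \<rho> = \<rho> i * (\<nu> i - 1) * (\<Prod>j\<in>{1..n} - {i}. \<nu> j)
      + \<nu> i * (\<Sum>j\<in>{1..n} - {i}. \<rho> j * (\<nu> j - 1) * (\<Prod>k\<in>{1..n} - {i, j}. \<nu> k))"
proof -
  have "(\<Sum>j\<in>{1..n} - {i}. \<rho> j * (\<nu> j - 1) * (\<Prod>k\<in>{1..n} - {j}. \<nu> k))
      = \<nu> i * (\<Sum>j\<in>{1..n} - {i}. \<rho> j * (\<nu> j - 1) * (\<Prod>k\<in>{1..n} - {i, j}. \<nu> k))"
    unfolding sum_distrib_left using assms
    by (intro sum.cong) (auto simp: prod_Diff_remove_pair)
  then show ?thesis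
    using assms unfolding xbar_num_def by (simp add: sum.remove[of _ i])
qed

lemma sum_ybar_num:
  assumes "n \<ge> 1"
  shows "(\<Sum>i\<in>{1..n}. ybar_num n \<nu> \<rho> i) = - real n * xbar_num n \<nu> \<rho>"
proof -
  let ?I = "{1..n}"
  define a where "a j = \<rho> j * (\<nu> j - 1)" for j
  define S where "S j = (\<Sum>i\<in>?I - {j}. \<Prod>k\<in>?I - {j, i}. \<nu> k)" for j
  define P where "P j = (\<Prod>k\<in>?I - {j}. \<nu> k)" for j
  have swapped: "(\<Sum>i\<in>?I. (1 - real n + real n * \<nu> i) *
        (\<Sum>j\<in>?I - {i}. a j * (\<Prod>k\<in>?I - {i, j}. \<nu> k)))
      = (\<Sum>j\<in>?I. a j * ((1 - real n) * S j + real n * (real n - 1) * P j))"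
  proof -
    have "(\<Sum>i\<in>?I. (1 - real n + real n * \<nu> i) *
          (\<Sum>j\<in>?I - {i}. a j * (\<Prod>k\<in>?I - {i, j}. \<nu> k)))
        = (\<Sum>j\<in>?I. \<Sum>i\<in>?I - {j}. a j * ((1 - real n + real n * \<nu> i) * (\<Prod>k\<in>?I - {i, j}. \<nu> k)))"
      unfolding sum_distrib_left
      by (subst sum_off_diagonal_swap) (simp_all add: algebra_simps)
    also have "\<dots> = (\<Sum>j\<in>?I. a j * ((1 - real n) * S j + real n * (real n - 1) * P j))"
      unfolding S_def P_def sum_distrib_left[symmetric]
      by (intro sum.cong refl) (simp add: sum_weighted_cofactors)
    finally show ?thesis .
  qed
  have "(\<Sum>i\<in>?I. ybar_num n \<nu> \<rho> i)
      = (\<Sum>i\<in>?I. a i * ((1 - real n) * S i + real n * (real n - 2) * P i))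
        - (\<Sum>j\<in>?I. a j * ((1 - real n) * S j + real n * (real n - 1) * P j))"
    unfolding ybar_num_def swapped[symmetric] sum_subtractf
    by (simp add: a_def S_def P_def mult.assoc insert_commute)
  also have "\<dots> = - real n * (\<Sum>i\<in>?I. a i * P i)"
    by (simp add: sum_subtractf[symmetric] sum_distrib_left algebra_simps)
  finally show ?thesis
    unfolding xbar_num_def a_def P_def by (simp add: mult.assoc)
qed

lemma sum_ybar:
  assumes "n \<ge> 1" "denom n \<nu> \<noteq> 0"
  shows "(\<Sum>i\<in>{1..n}. ybar n \<nu> \<rho> i) = 1 - xbar n \<nu> \<rho>"
proof -
  have "(\<Sum>i\<in>{1..n}. ybar n \<nu> \<rho> i)
      = (\<Sum>i\<in>{1..n}. 1 / real n) + (\<Sum>i\<in>{1..n}. ybar_num n \<nu> \<rho> i) / (real n * denom n \<nu>)"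
    unfolding ybar_eq by (simp add: sum.distrib sum_divide_distrib)
  also have "\<dots> = 1 - xbar n \<nu> \<rho>"
    unfolding sum_ybar_num[OF assms(1)] xbar_eq using assms by simp
  finally show ?thesis .
qed

lemma sum_Diff_differences:
  fixes y :: "'a \<Rightarrow> real"
  assumes "finite I" "i \<in> I"
  shows "(\<Sum>j\<in>I - {i}. y j - y i) = (\<Sum>j\<in>I. y j) - real (card I) * y i"
  using assms real_card_Diff_singleton[OF assms]
  by (simp add: sum_subtractf sum.remove algebra_simps)

lemma equilibrium_component_identity:
  fixes n r v p s t A D N :: real
  assumes "n > 1" "D \<noteq> 0"
    and "D = (n * v - 1) * p - v * s"
    and "A = r * (v - 1) * p + v * t"
    and "N = r * (v - 1) * ((1 - n) * s + n * (n - 2) * p) - (1 - n + n * v) * t"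
  shows "(1 - v) * (A / D - r) + v / (n - 1) * (1 - A / D - n * (1 / n + N / (n * D))) = 0"
proof -
  have "(1 - v) * (A / D - r) + v / (n - 1) * (1 - A / D - n * (1 / n + N / (n * D)))
      = ((1 - v) * (n - 1) * (A - r * D) - v * (A + N)) / ((n - 1) * D)"
    using assms(1,2) by (simp add: field_simps)
  also have "(1 - v) * (n - 1) * (A - r * D) - v * (A + N) = 0"
    unfolding assms(3-5) by algebra
  finally show ?thesis by simp
qed

lemma rhs_y_at_equilibrium:
  assumes "n \<ge> 2" "denom n \<nu> \<noteq> 0" "i \<in> {1..n}"
  shows "rhs_y n \<beta> \<nu> \<rho> (xbar n \<nu> \<rho>) (ybar n \<nu> \<rho>) i = 0"
proof -
  have coupling: "(\<Sum>j\<in>{1..n} - {i}. ybar n \<nu> \<rho> j - ybar n \<nu> \<rho> i)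
      = 1 - xbar n \<nu> \<rho> - real n * ybar n \<nu> \<rho> i"
    using sum_Diff_differences[of "{1..n}" i] sum_ybar[of n] assms by simp
  have "(1 - \<nu> i) * (xbar n \<nu> \<rho> - \<rho> i)
      + \<nu> i / (real n - 1) * (1 - xbar n \<nu> \<rho> - real n * ybar n \<nu> \<rho> i) = 0"
    unfolding xbar_eq ybar_eq ybar_num_def
    by (rule equilibrium_component_identity[OF _ assms(2) denom_expand_at[OF assms(3)]
          xbar_num_expand_at[OF assms(3)]])
       (use assms(1) in simp_all)
  then show ?thesis
    unfolding rhs_y_def coupling by simp
qed

theorem lemma10p6:
  fixes n :: nat and \<beta> \<nu> \<rho> :: "nat \<Rightarrow> real"
  assumes "n \<ge> 2"
    and "\<forall>i\<in>{1..n}. \<beta> i > 0"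
    and "\<forall>i\<in>{1..n}. 0 \<le> \<nu> i \<and> \<nu> i \<le> 1"
    and "\<forall>i\<in>{1..n}. 0 \<le> \<rho> i \<and> \<rho> i \<le> 1"
    and "card {i\<in>{1..n}. \<nu> i = 0} \<le> 1"
    and "\<not> (\<forall>i\<in>{1..n}. \<nu> i = 1)"
    and "\<not> (\<forall>i\<in>{1..n}. \<nu> i = 0)"
    and "\<not> (\<forall>i\<in>{1..n}. \<rho> i = 1)"
    and "\<not> (\<forall>i\<in>{1..n}. \<rho> i = 0)"
  shows "is_equilibrium n \<beta> \<nu> \<rho> (xbar n \<nu> \<rho>) (ybar n \<nu> \<rho>)"
proof -
  have D: "denom n \<nu> \<noteq> 0"
    using denom_neg[OF assms(3,5,6)] by simp
  have "(\<Sum>i\<in>{1..n}. ybar n \<nu> \<rho> i) = 1 - xbar n \<nu> \<rho>"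
    using sum_ybar[OF _ D] assms(1) by simp
  then show ?thesis
    unfolding is_equilibrium_def rhs_x_def
    using rhs_y_at_equilibrium[OF assms(1) D] by simp
qed

end
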